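(* Let $m\geq1$ and $0\leq r_1<r_2\leq m$, and let $q=p^t$ be a power of an odd prime $p$, $t\geq1$. Then there exists an asymmetric quantum code with parameters $[[t2^m,\ t[k(r_2)-k(r_1)],\ d_z/d_x]]_p$, where $k(r)=\sum_{i=0}^{r}\binom{m}{i}$, $d_z\geq 2^{m-r_2}$ and $d_x\geq 2^{r_1+1}$.
   Context: An AQECC $[[n,k,d_z/d_x]]_p$ is a $p^k$-dimensional subspace of $\mathbb{C}^{p^n}$ correcting all qudit-flip errors up to $\lfloor (d_x-1)/2\rfloor$ and all phase-shift errors up to $\lfloor (d_z-1)/2\rfloor$. *)

theory Defs
  imports "Jordan_Normal_Form.VS_Connect" "HOL-Computational_Algebra.Primes"
begin

text \<open>The computational basis of (C^p)^{\<otimes> n} = C^(p^n) is indexed by i < p^n;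
  the j-th qudit (digit) of basis index i is (i div p^j) mod p.
  Vectors are Jordan_Normal_Form vectors of dimension p^n.\<close>

definition qdigit :: "nat \<Rightarrow> nat \<Rightarrow> nat \<Rightarrow> nat" where
  "qdigit p i j = (i div p ^ j) mod p"

definition Fp_vec :: "nat \<Rightarrow> nat \<Rightarrow> (nat \<Rightarrow> nat) \<Rightarrow> bool" where
  "Fp_vec p n a \<longleftrightarrow> (\<forall>l<n. a l < p)"

definition hweight :: "nat \<Rightarrow> (nat \<Rightarrow> nat) \<Rightarrow> nat" where
  "hweight n a = card {l. l < n \<and> a l \<noteq> 0}"

text \<open>Qudit-flip operator X(a): |x> \<mapsto> |x + a>.\<close>
definition Xop :: "nat \<Rightarrow> nat \<Rightarrow> (nat \<Rightarrow> nat) \<Rightarrow> complex mat" where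
  "Xop p n a = mat (p ^ n) (p ^ n)
     (\<lambda>(i, j). if (\<forall>l<n. qdigit p i l = (qdigit p j l + a l) mod p) then 1 else 0)"

text \<open>Phase-shift operator Z(b): |x> \<mapsto> \<omega>^(b\<cdot>x) |x>, \<omega> = exp(2\<pi>i/p).\<close>
definition Zop :: "nat \<Rightarrow> nat \<Rightarrow> (nat \<Rightarrow> nat) \<Rightarrow> complex mat" where
  "Zop p n b = mat (p ^ n) (p ^ n)
     (\<lambda>(i, j). if i = j then cis (2 * pi / real p) ^ (\<Sum>l<n. b l * qdigit p j l) else 0)"

definition error_set :: "nat \<Rightarrow> nat \<Rightarrow> nat \<Rightarrow> nat \<Rightarrow> complex mat set" where
  "error_set p n ex ez =
     {Xop p n a * Zop p n b | a b. Fp_vec p n a \<and> Fp_vec p n b \<and>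
                                   hweight n a \<le> ex \<and> hweight n b \<le> ez}"

definition cinner :: "complex vec \<Rightarrow> complex vec \<Rightarrow> complex" where
  "cinner u v = (\<Sum>i<dim_vec u. cnj (u $ i) * v $ i)"

text \<open>Q corrects the error set E (Knill-Laflamme condition):
  for all E1, E2 \<in> E there is a constant c with <E1 u|E2 v> = c <u|v> for all u, v \<in> Q.\<close>
definition corrects :: "complex vec set \<Rightarrow> complex mat set \<Rightarrow> bool" where
  "corrects Q E \<longleftrightarrow> (\<forall>E1\<in>E. \<forall>E2\<in>E. \<exists>c::complex. \<forall>u\<in>Q. \<forall>v\<in>Q.
       cinner (E1 *\<^sub>v u) (E2 *\<^sub>v v) = c * cinner u v)"

definition is_AQECC :: "nat \<Rightarrow> nat \<Rightarrow> nat \<Rightarrow> nat \<Rightarrow> nat \<Rightarrow> complex vec set \<Rightarrow> bool" where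
  "is_AQECC p n k dz dx Q \<longleftrightarrow>
     subspace class_ring Q (module_vec TYPE(complex) (p ^ n)) \<and>
     vectorspace.dim class_ring ((module_vec TYPE(complex) (p ^ n))\<lparr>carrier := Q\<rparr>) = p ^ k \<and>
     corrects Q (error_set p n ((dx - 1) div 2) ((dz - 1) div 2))"

definition kRM :: "nat \<Rightarrow> nat \<Rightarrow> nat" where
  "kRM m r = (\<Sum>i = 0..r. m choose i)"

end

theory Submission
  imports Defs "Jordan_Normal_Form.DL_Rank"
begin

text \<open>The code is the CSS code of the pair \<open>C\<^sub>2 \<subseteq> C\<^sub>1\<close>, where \<open>C\<^sub>i\<close> is the dual of the
  Reed--Muller code \<open>RM(r\<^sub>i, m)\<close> over the alphabet \<open>(\<int>/p\<int>)^t\<close>. Reed--Muller codes are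
  built recursively by the Plotkin construction \<open>(u | u + v)\<close>, whose dual is the construction
  \<open>(a - b | b)\<close>; this recursion yields the sizes of the codes, the minimum weights \<open>2^(m-r)\<close> of
  \<open>RM(r, m)\<close> and \<open>2^(r+1)\<close> of its dual, and \<open>C\<^sup>\<bottom>\<^sup>\<bottom> = C\<close>. The quantum code is spanned by
  the indicator vectors of the cosets of \<open>C\<^sub>2\<close> in \<open>C\<^sub>1\<close>. For errors \<open>X(a)Z(b)\<close> the
  Knill--Laflamme inner products are character sums over these cosets: they vanish unless
  \<open>a \<in> C\<^sub>2\<close>, and are then proportional to the inner product of the code vectors when
  \<open>b \<in> C\<^sub>1\<^sup>\<bottom>\<close> and vanish when \<open>b \<notin> C\<^sub>2\<^sup>\<bottom>\<close>; the weight bounds exclude all other cases.\<close>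

lemma kRM_0: "kRM 0 r = 1"
  by (induction r) (auto simp: kRM_def)

lemma kRM_Suc_Suc: "kRM (Suc m) (Suc r) = kRM m (Suc r) + kRM m r"
proof (induction r)
  case (Suc r)
  have "kRM (Suc m) (Suc (Suc r)) = kRM (Suc m) (Suc r) + (Suc m choose Suc (Suc r))"
    unfolding kRM_def by simp
  also have "\<dots> = kRM m (Suc r) + kRM m r + (m choose Suc r) + (m choose Suc (Suc r))"
    using Suc.IH by simp
  also have "\<dots> = kRM m (Suc (Suc r)) + kRM m (Suc r)"
    unfolding kRM_def by simp
  finally show ?case .
qed (simp add: kRM_def)

lemma kRM_mono: "r1 \<le> r2 \<Longrightarrow> kRM m r1 \<le> kRM m r2"
  unfolding kRM_def by (rule sum_mono2) auto

fun dual_rm_dim :: "nat \<Rightarrow> nat \<Rightarrow> nat" where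
  "dual_rm_dim s 0 = (if s = 0 then 1 else 0)"
| "dual_rm_dim s (Suc m) = dual_rm_dim s m + dual_rm_dim (s - 1) m"

lemma dual_rm_dim_0: "dual_rm_dim 0 m = 2 ^ m"
  by (induction m) auto

lemma dual_rm_dim_add_kRM: "dual_rm_dim (Suc r) m + kRM m r = 2 ^ m"
proof (induction m arbitrary: r)
  case 0
  then show ?case by (simp add: kRM_0)
next
  case (Suc m)
  show ?case
  proof (cases r)
    case 0
    then show ?thesis using Suc.IH[of 0] by (simp add: dual_rm_dim_0 kRM_def)
  next
    case (Suc r')
    then show ?thesis using Suc.IH[of r] Suc.IH[of r'] by (simp add: kRM_Suc_Suc)
  qed
qed

lemma sum_mod_cong:
  fixes f g :: "'b \<Rightarrow> 'a::euclidean_semiring_cancel"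
  shows "(\<And>x. x \<in> A \<Longrightarrow> f x mod m = g x mod m) \<Longrightarrow> sum f A mod m = sum g A mod m"
  by (metis (mono_tags, lifting) mod_sum_eq sum.cong)

lemma sum_lessThan_double: "(\<Sum>l<2 * L. f l) = (\<Sum>l<L. f l) + (\<Sum>l<L. f (l + L))"
  for f :: "nat \<Rightarrow> 'a::comm_monoid_add"
proof -
  have "{..<2 * L} = {..<L} \<union> {L..<L + L}" by auto
  then have "(\<Sum>l<2 * L. f l) = (\<Sum>l<L. f l) + (\<Sum>l\<in>{L..<L + L}. f l)"
    by (simp add: sum.union_disjoint ivl_disj_int)
  also have "(\<Sum>l\<in>{L..<L + L}. f l) = (\<Sum>l<L. f (l + L))"
    using sum.shift_bounds_nat_ivl[of f 0 L L] by (simp add: atLeast0LessThan)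
  finally show ?thesis .
qed

locale residue_vectors =
  fixes p :: nat
  assumes two_le_p: "2 \<le> p"
begin

abbreviation P :: int where "P \<equiv> int p"

text \<open>A vector of length \<open>L\<close> over \<open>\<int>/p\<int>\<close> is a function \<open>nat \<Rightarrow> int\<close> with entries in
  \<open>{0..<p}\<close> below \<open>L\<close> and \<open>0\<close> from \<open>L\<close> on, so that vectors of different lengths can
  be compared and concatenated.\<close>

definition vecs :: "nat \<Rightarrow> (nat \<Rightarrow> int) set" where
  "vecs L = {x. \<forall>l. (l < L \<longrightarrow> 0 \<le> x l \<and> x l < P) \<and> (L \<le> l \<longrightarrow> x l = 0)}"

definition vzero :: "nat \<Rightarrow> int" where "vzero = (\<lambda>_. 0)"

definition vadd :: "(nat \<Rightarrow> int) \<Rightarrow> (nat \<Rightarrow> int) \<Rightarrow> nat \<Rightarrow> int" where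
  "vadd x y = (\<lambda>l. (x l + y l) mod P)"

definition vneg :: "(nat \<Rightarrow> int) \<Rightarrow> nat \<Rightarrow> int" where
  "vneg x = (\<lambda>l. (- x l) mod P)"

definition vsub :: "(nat \<Rightarrow> int) \<Rightarrow> (nat \<Rightarrow> int) \<Rightarrow> nat \<Rightarrow> int" where
  "vsub x y = (\<lambda>l. (x l - y l) mod P)"

definition dot :: "nat \<Rightarrow> (nat \<Rightarrow> int) \<Rightarrow> (nat \<Rightarrow> int) \<Rightarrow> int" where
  "dot L x y = (\<Sum>l<L. x l * y l)"

definition weight :: "nat \<Rightarrow> (nat \<Rightarrow> int) \<Rightarrow> nat" where
  "weight L x = card {l. l < L \<and> x l \<noteq> 0}"

definition additive_code :: "nat \<Rightarrow> (nat \<Rightarrow> int) set \<Rightarrow> bool" where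
  "additive_code L A \<longleftrightarrow> A \<subseteq> vecs L \<and> vzero \<in> A \<and>
     (\<forall>x\<in>A. \<forall>y\<in>A. vadd x y \<in> A) \<and> (\<forall>x\<in>A. vneg x \<in> A)"

definition dual :: "nat \<Rightarrow> (nat \<Rightarrow> int) set \<Rightarrow> (nat \<Rightarrow> int) set" where
  "dual L A = {x \<in> vecs L. \<forall>y\<in>A. dot L x y mod P = 0}"

lemma P_pos: "0 < P" using two_le_p by simp

lemma p_pos[simp]: "0 < p" using two_le_p by simp

lemma vecsD:
  assumes "x \<in> vecs L"
  shows "l < L \<Longrightarrow> 0 \<le> x l" "l < L \<Longrightarrow> x l < P" "L \<le> l \<Longrightarrow> x l = 0"
  using assms unfolding vecs_def by auto

lemma vecs_range: "x \<in> vecs L \<Longrightarrow> 0 \<le> x l \<and> x l < P"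
  using P_pos by (cases "l < L") (auto simp: vecsD)

lemma vecs_mod[simp]: "x \<in> vecs L \<Longrightarrow> x l mod P = x l"
  using vecs_range by simp

lemma vecsI: "(\<And>l. 0 \<le> x l \<and> x l < P) \<Longrightarrow> (\<And>l. L \<le> l \<Longrightarrow> x l = 0) \<Longrightarrow> x \<in> vecs L"
  unfolding vecs_def by auto

lemma vzero_vecs[simp]: "vzero \<in> vecs L"
  unfolding vecs_def vzero_def using P_pos by auto

lemma vadd_vecs[simp]: "x \<in> vecs L \<Longrightarrow> y \<in> vecs L \<Longrightarrow> vadd x y \<in> vecs L"
  unfolding vadd_def by (rule vecsI) (auto simp: P_pos vecsD)

lemma vsub_vecs[simp]: "x \<in> vecs L \<Longrightarrow> y \<in> vecs L \<Longrightarrow> vsub x y \<in> vecs L"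
  unfolding vsub_def by (rule vecsI) (auto simp: P_pos vecsD)

lemma vneg_vecs[simp]: "x \<in> vecs L \<Longrightarrow> vneg x \<in> vecs L"
  unfolding vneg_def by (rule vecsI) (auto simp: P_pos vecsD)

lemma vadd_vzero[simp]: "x \<in> vecs L \<Longrightarrow> vadd x vzero = x"
  unfolding vadd_def vzero_def by auto

lemma vsub_vzero[simp]: "x \<in> vecs L \<Longrightarrow> vsub x vzero = x"
  unfolding vsub_def vzero_def by auto

lemma vneg_vzero[simp]: "vneg vzero = vzero"
  unfolding vneg_def vzero_def by auto

lemma vsub_self[simp]: "vsub x x = vzero"
  unfolding vsub_def vzero_def by auto

lemma vadd_commute: "vadd x y = vadd y x"
  unfolding vadd_def by (auto simp: add.commute)

lemma vadd_assoc: "vadd (vadd x y) z = vadd x (vadd y z)"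
  unfolding vadd_def by (auto simp: mod_simps add.assoc)

lemma vsub_eq_vadd_vneg: "vsub x y = vadd x (vneg y)"
  unfolding vsub_def vadd_def vneg_def by (auto simp: mod_simps)

lemma vadd_vsub_cancel: "y \<in> vecs L \<Longrightarrow> vadd x (vsub y x) = y"
  unfolding vadd_def vsub_def by (auto simp: mod_simps)

lemma vsub_vadd_cancel: "z \<in> vecs L \<Longrightarrow> vsub (vadd z a) a = z"
  unfolding vadd_def vsub_def by (auto simp: mod_simps)

lemma vsub_vadd_cancel_left: "z \<in> vecs L \<Longrightarrow> vsub (vadd a z) a = z"
  using vsub_vadd_cancel[of z L a] by (simp add: vadd_commute)

lemma vsub_vsub_cancel: "a \<in> vecs L \<Longrightarrow> vsub z (vsub z a) = a"
  unfolding vsub_def by (auto simp: mod_simps)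

lemma vsub_vadd_left: "vsub (vadd x y) z = vadd x (vsub y z)"
  unfolding vsub_def vadd_def by (auto simp: mod_simps algebra_simps)

lemma vsub_vadd_right: "vsub (vadd z a) b = vsub z (vsub b a)"
  unfolding vsub_def vadd_def by (auto simp: mod_simps algebra_simps)

lemma vsub_vadd_vadd: "vsub (vadd a b) (vadd c d) = vadd (vsub a c) (vsub b d)"
  unfolding vsub_def vadd_def
  by (rule ext, simp only: mod_diff_eq mod_add_eq, simp add: algebra_simps)

lemma vsub_vneg_vneg: "vsub (vneg a) (vneg c) = vneg (vsub a c)"
  unfolding vsub_def vneg_def
  by (rule ext, simp only: mod_diff_eq mod_minus_eq, simp add: algebra_simps)

lemma vsub_eq_vzero_iff:
  assumes "x \<in> vecs L" "y \<in> vecs L"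
  shows "vsub x y = vzero \<longleftrightarrow> x = y"
proof
  assume "vsub x y = vzero"
  then have "\<And>l. (x l - y l) mod P = 0" unfolding vsub_def vzero_def by meson
  then have "\<And>l. x l mod P = y l mod P" by (simp add: mod_eq_dvd_iff dvd_eq_mod_eq_0)
  then show "x = y" using assms by auto
qed simp

lemma vadd_eq_vzero_iff:
  assumes "x \<in> vecs L" "y \<in> vecs L"
  shows "vadd x y = vzero \<longleftrightarrow> x = vneg y"
  using vsub_eq_vzero_iff[OF assms(1) vneg_vecs[OF assms(2)]]
  unfolding vsub_def vadd_def vneg_def by (simp add: mod_diff_right_eq)

lemma dot_commute: "dot L x y = dot L y x"
  unfolding dot_def by (simp add: mult.commute)

lemma dot_vzero_right[simp]: "dot L x vzero = 0"
  unfolding dot_def vzero_def by simp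

lemma dot_vzero_left[simp]: "dot L vzero x = 0"
  unfolding dot_def vzero_def by simp

lemma dot_vadd_right: "dot L x (vadd y z) mod P = (dot L x y + dot L x z) mod P"
proof -
  have "dot L x (vadd y z) mod P = (\<Sum>l<L. x l * (y l + z l)) mod P"
    unfolding dot_def vadd_def by (rule sum_mod_cong) (simp add: mod_simps)
  then show ?thesis by (simp add: dot_def distrib_left sum.distrib)
qed

lemma dot_vsub_right: "dot L x (vsub y z) mod P = (dot L x y - dot L x z) mod P"
proof -
  have "dot L x (vsub y z) mod P = (\<Sum>l<L. x l * y l - x l * z l) mod P"
    unfolding dot_def vsub_def
    by (rule sum_mod_cong) (simp add: mod_simps right_diff_distrib)
  then show ?thesis by (simp add: dot_def sum_subtractf)
qed

lemma dot_vadd_left: "dot L (vadd y z) x mod P = (dot L y x + dot L z x) mod P"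
  using dot_vadd_right by (simp add: dot_commute)

lemma dot_vneg_left: "dot L (vneg y) x mod P = (- dot L y x) mod P"
proof -
  have "dot L (vneg y) x mod P = (\<Sum>l<L. - (y l * x l)) mod P"
    unfolding dot_def vneg_def by (rule sum_mod_cong) (simp add: mod_simps)
  then show ?thesis by (simp add: dot_def sum_negf)
qed

lemma dot_vsub_left: "dot L (vsub y z) x mod P = (dot L y x - dot L z x) mod P"
  using dot_vsub_right by (simp add: dot_commute)

lemma weight_vadd_le: "weight L (vadd x y) \<le> weight L x + weight L y"
proof -
  have "weight L (vadd x y) \<le> card ({l. l < L \<and> x l \<noteq> 0} \<union> {l. l < L \<and> y l \<noteq> 0})"
    unfolding weight_def vadd_def by (intro card_mono) auto
  also have "\<dots> \<le> weight L x + weight L y"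
    unfolding weight_def by (rule card_Un_le)
  finally show ?thesis .
qed

lemma vneg_eq_0_iff:
  assumes x: "x \<in> vecs L"
  shows "vneg x l = 0 \<longleftrightarrow> x l = 0"
proof
  assume "vneg x l = 0"
  then have "P dvd - x l" unfolding vneg_def by (simp add: dvd_eq_mod_eq_0)
  then have "P dvd x l" by simp
  then show "x l = 0" using vecs_range[OF x, of l] by (metis zdvd_not_zless antisym_conv1)
qed (simp add: vneg_def)

lemma weight_vneg: "x \<in> vecs L \<Longrightarrow> weight L (vneg x) = weight L x"
  unfolding weight_def using vneg_eq_0_iff by simp

lemma weight_vsub_le: "y \<in> vecs L \<Longrightarrow> weight L (vsub x y) \<le> weight L x + weight L y"
  using weight_vadd_le[of L x "vneg y"] weight_vneg[of y L] by (simp add: vsub_eq_vadd_vneg)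

lemma weight_pos: "x \<in> vecs L \<Longrightarrow> x \<noteq> vzero \<Longrightarrow> 1 \<le> weight L x"
proof -
  assume x: "x \<in> vecs L" and "x \<noteq> vzero"
  then obtain l where l: "x l \<noteq> 0" unfolding vzero_def by auto
  with vecsD(3)[OF x] have "l < L" by (meson not_le)
  with l have "{l. l < L \<and> x l \<noteq> 0} \<noteq> {}" by auto
  then show ?thesis unfolding weight_def by (simp add: Suc_leI card_gt_0_iff)
qed

lemma card_vecs: "card (vecs L) = p ^ L"
proof (induction L)
  case 0
  have "vecs 0 = {vzero}" unfolding vecs_def vzero_def by auto
  then show ?case by simp
next
  case (Suc L)
  have "bij_betw (\<lambda>(y, c). y(L := c)) (vecs L \<times> {0..<P}) (vecs (Suc L))"
    by (rule bij_betw_byWitness[where f' = "\<lambda>x. (x(L := 0), x L)"]) (auto simp: vecs_def fun_eq_iff)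
  then have "card (vecs (Suc L)) = card (vecs L) * p"
    using bij_betw_same_card by (fastforce simp: card_cartesian_product)
  then show ?case using Suc.IH by simp
qed

lemma finite_vecs[simp]: "finite (vecs L)"
  using card_vecs[of L] by (intro card_ge_0_finite) simp

lemma bij_betw_vadd: "a \<in> vecs L \<Longrightarrow> bij_betw (\<lambda>z. vadd z a) (vecs L) (vecs L)"
  by (rule bij_betw_byWitness[where f' = "\<lambda>z. vsub z a"])
    (auto simp: vsub_vadd_cancel vadd_vsub_cancel vadd_commute)

lemma sum_vecs_shift: "a \<in> vecs L \<Longrightarrow> (\<Sum>z\<in>vecs L. f (vadd z a)) = (\<Sum>z\<in>vecs L. f z)"
  using sum.reindex_bij_betw[OF bij_betw_vadd] by blast

lemma additive_codeD:
  assumes "additive_code L A"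
  shows "A \<subseteq> vecs L" "vzero \<in> A"
    "x \<in> A \<Longrightarrow> y \<in> A \<Longrightarrow> vadd x y \<in> A" "x \<in> A \<Longrightarrow> vneg x \<in> A"
  using assms unfolding additive_code_def by auto

lemma additive_code_vsub: "additive_code L A \<Longrightarrow> x \<in> A \<Longrightarrow> y \<in> A \<Longrightarrow> vsub x y \<in> A"
  by (simp add: vsub_eq_vadd_vneg additive_codeD)

lemma additive_code_vecs: "additive_code L (vecs L)"
  unfolding additive_code_def by auto

lemma additive_code_zero: "additive_code L {vzero}"
  unfolding additive_code_def by auto

lemma dual_subset_vecs: "dual L A \<subseteq> vecs L"
  unfolding dual_def by auto

lemma dual_antimono: "A \<subseteq> B \<Longrightarrow> dual L B \<subseteq> dual L A"
  unfolding dual_def by auto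

lemma additive_code_dual: "additive_code L (dual L A)"
  unfolding additive_code_def
proof (intro conjI ballI)
  fix x y assume x: "x \<in> dual L A" and y: "y \<in> dual L A"
  have "dot L (vadd x y) z mod P = 0" if "z \<in> A" for z
    using dot_vadd_left[of L x y z] mod_add_eq[of "dot L x z" P "dot L y z"] x y that
    unfolding dual_def by simp
  then show "vadd x y \<in> dual L A" using x y unfolding dual_def by simp
  have "dot L (vneg x) z mod P = 0" if "z \<in> A" for z
    using dot_vneg_left[of L x z] mod_minus_eq[of "dot L x z" P] x that
    unfolding dual_def by simp
  then show "vneg x \<in> dual L A" using x unfolding dual_def by simp
qed (auto simp: dual_def)

lemma dual_vecs: "dual L (vecs L) = {vzero}"
proof -
  have "x = vzero" if x: "x \<in> dual L (vecs L)" for x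
  proof
    fix l
    show "x l = vzero l"
    proof (cases "l < L")
      case True
      define e where "e = (\<lambda>k. if k = l then (1::int) else 0)"
      have "e \<in> vecs L" unfolding e_def by (rule vecsI) (use True two_le_p in auto)
      moreover have "dot L x e = x l"
        unfolding dot_def e_def using True by (simp add: if_distrib cong: if_cong)
      ultimately have "x l mod P = 0" using x unfolding dual_def by auto
      moreover have "x \<in> vecs L" using x dual_subset_vecs by blast
      ultimately show ?thesis unfolding vzero_def by simp
    qed (use x vecsD(3)[of x L l] in \<open>auto simp: vzero_def dual_def\<close>)
  qed
  then show ?thesis unfolding dual_def by auto
qed

lemma dual_zero: "dual L {vzero} = vecs L"
  unfolding dual_def by simp

lemma dual_of_sums_iff:
  assumes "vzero \<in> A" "vzero \<in> B" "x \<in> vecs L" "y \<in> vecs L"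
  shows "(\<forall>u\<in>A. \<forall>v\<in>B. (dot L x u + dot L y v) mod P = 0) \<longleftrightarrow> x \<in> dual L A \<and> y \<in> dual L B"
proof
  assume h: "\<forall>u\<in>A. \<forall>v\<in>B. (dot L x u + dot L y v) mod P = 0"
  have "dot L x u mod P = 0" if "u \<in> A" for u using h assms(2) that by force
  moreover have "dot L y v mod P = 0" if "v \<in> B" for v using h assms(1) that by force
  ultimately show "x \<in> dual L A \<and> y \<in> dual L B" using assms(3,4) unfolding dual_def by blast
next
  assume d: "x \<in> dual L A \<and> y \<in> dual L B"
  show "\<forall>u\<in>A. \<forall>v\<in>B. (dot L x u + dot L y v) mod P = 0"
  proof (intro ballI)
    fix u v assume "u \<in> A" "v \<in> B"
    then have "dot L x u mod P = 0" "dot L y v mod P = 0" using d unfolding dual_def by auto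
    then show "(dot L x u + dot L y v) mod P = 0"
      using mod_add_eq[of "dot L x u" P "dot L y v"] by simp
  qed
qed

section \<open>The Plotkin construction\<close>

definition lo :: "nat \<Rightarrow> (nat \<Rightarrow> int) \<Rightarrow> nat \<Rightarrow> int" where
  "lo L z = (\<lambda>l. if l < L then z l else 0)"

definition hi :: "nat \<Rightarrow> (nat \<Rightarrow> int) \<Rightarrow> nat \<Rightarrow> int" where
  "hi L z = (\<lambda>l. z (l + L))"

definition cat :: "nat \<Rightarrow> (nat \<Rightarrow> int) \<Rightarrow> (nat \<Rightarrow> int) \<Rightarrow> nat \<Rightarrow> int" where
  "cat L x y = (\<lambda>l. if l < L then x l else y (l - L))"

lemma lo_vecs[simp]: "z \<in> vecs (2 * L) \<Longrightarrow> lo L z \<in> vecs L"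
  unfolding lo_def by (rule vecsI) (auto simp: vecs_range P_pos)

lemma hi_vecs[simp]: "z \<in> vecs (2 * L) \<Longrightarrow> hi L z \<in> vecs L"
  unfolding hi_def by (rule vecsI) (auto simp: vecs_range vecsD)

lemma cat_vecs[simp]: "x \<in> vecs L \<Longrightarrow> y \<in> vecs L \<Longrightarrow> cat L x y \<in> vecs (2 * L)"
  unfolding cat_def by (rule vecsI) (auto simp: vecs_range vecsD)

lemma lo_cat[simp]: "x \<in> vecs L \<Longrightarrow> lo L (cat L x y) = x"
  unfolding lo_def cat_def by (auto simp: vecsD)

lemma hi_cat[simp]: "hi L (cat L x y) = y"
  unfolding hi_def cat_def by (simp add: fun_eq_iff)

lemma cat_lo_hi[simp]: "z \<in> vecs (2 * L) \<Longrightarrow> cat L (lo L z) (hi L z) = z"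
  unfolding lo_def hi_def cat_def by auto

lemma lo_vadd: "lo L (vadd z w) = vadd (lo L z) (lo L w)"
  unfolding lo_def vadd_def by auto

lemma hi_vadd: "hi L (vadd z w) = vadd (hi L z) (hi L w)"
  unfolding hi_def vadd_def by auto

lemma lo_vneg: "lo L (vneg z) = vneg (lo L z)"
  unfolding lo_def vneg_def by auto

lemma hi_vneg: "hi L (vneg z) = vneg (hi L z)"
  unfolding hi_def vneg_def by auto

lemma lo_vzero[simp]: "lo L vzero = vzero"
  unfolding lo_def vzero_def by auto

lemma hi_vzero[simp]: "hi L vzero = vzero"
  unfolding hi_def vzero_def by auto

lemma vzero_iff_lo_hi:
  assumes "z \<in> vecs (2 * L)"
  shows "z = vzero \<longleftrightarrow> lo L z = vzero \<and> hi L z = vzero"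
proof
  assume "lo L z = vzero \<and> hi L z = vzero"
  then have "z = cat L vzero vzero" using cat_lo_hi[OF assms] by simp
  then show "z = vzero" by (simp add: cat_def vzero_def fun_eq_iff)
qed simp

lemma dot_double: "dot (2 * L) x y = dot L (lo L x) (lo L y) + dot L (hi L x) (hi L y)"
  unfolding dot_def lo_def hi_def by (simp add: sum_lessThan_double)

lemma weight_double: "weight (2 * L) z = weight L (lo L z) + weight L (hi L z)"
proof -
  let ?lo = "{l. l < L \<and> lo L z l \<noteq> 0}" and ?hi = "{l. l < L \<and> hi L z l \<noteq> 0}"
  have "{l. l < 2 * L \<and> z l \<noteq> 0} = ?lo \<union> (\<lambda>l. l + L) ` ?hi"
  proof (intro equalityI subsetI)
    fix l assume l: "l \<in> {l. l < 2 * L \<and> z l \<noteq> 0}"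
    show "l \<in> ?lo \<union> (\<lambda>l. l + L) ` ?hi"
    proof (cases "l < L")
      case False
      then have "l = (l - L) + L" "l - L \<in> ?hi" using l by (auto simp: hi_def)
      then show ?thesis by blast
    qed (use l in \<open>simp add: lo_def\<close>)
  qed (auto simp: lo_def hi_def split: if_splits)
  moreover have "card (?lo \<union> (\<lambda>l. l + L) ` ?hi) = card ?lo + card ?hi"
    by (subst card_Un_disjoint) (auto simp: card_image)
  ultimately show ?thesis unfolding weight_def by simp
qed

text \<open>\<open>plotkin L A B\<close> is the \<open>(u | u + v)\<close> construction with \<open>u \<in> A\<close>, \<open>v \<in> B\<close>, and
  \<open>plotkin_dual L A B\<close> consists of the words \<open>(a - b | b)\<close> with \<open>a \<in> A\<close>, \<open>b \<in> B\<close>.\<close>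

definition plotkin :: "nat \<Rightarrow> (nat \<Rightarrow> int) set \<Rightarrow> (nat \<Rightarrow> int) set \<Rightarrow> (nat \<Rightarrow> int) set" where
  "plotkin L A B = {z \<in> vecs (2 * L). lo L z \<in> A \<and> vsub (hi L z) (lo L z) \<in> B}"

definition plotkin_dual :: "nat \<Rightarrow> (nat \<Rightarrow> int) set \<Rightarrow> (nat \<Rightarrow> int) set \<Rightarrow> (nat \<Rightarrow> int) set" where
  "plotkin_dual L A B = {z \<in> vecs (2 * L). hi L z \<in> B \<and> vadd (lo L z) (hi L z) \<in> A}"

lemma plotkin_eq_image:
  assumes "A \<subseteq> vecs L" "B \<subseteq> vecs L"
  shows "plotkin L A B = (\<lambda>(u, v). cat L u (vadd u v)) ` (A \<times> B)"
proof (intro equalityI subsetI)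
  fix z assume z: "z \<in> plotkin L A B"
  then have zv: "z \<in> vecs (2 * L)" unfolding plotkin_def by simp
  then have "z = cat L (lo L z) (vadd (lo L z) (vsub (hi L z) (lo L z)))"
    by (simp add: vadd_vsub_cancel[OF hi_vecs[OF zv]])
  with z show "z \<in> (\<lambda>(u, v). cat L u (vadd u v)) ` (A \<times> B)"
    unfolding plotkin_def by force
qed (use assms in \<open>auto simp: plotkin_def subset_iff vsub_vadd_cancel_left\<close>)

lemma plotkin_dual_eq_image:
  assumes "A \<subseteq> vecs L" "B \<subseteq> vecs L"
  shows "plotkin_dual L A B = (\<lambda>(a, b). cat L (vsub a b) b) ` (A \<times> B)"
proof (intro equalityI subsetI)
  fix z assume z: "z \<in> plotkin_dual L A B"
  then have zv: "z \<in> vecs (2 * L)" unfolding plotkin_dual_def by simp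
  then have "z = cat L (vsub (vadd (lo L z) (hi L z)) (hi L z)) (hi L z)"
    by (simp add: vsub_vadd_cancel[OF lo_vecs[OF zv]])
  with z show "z \<in> (\<lambda>(a, b). cat L (vsub a b) b) ` (A \<times> B)"
    unfolding plotkin_dual_def by force
qed (use assms in \<open>auto simp: plotkin_dual_def subset_iff vadd_commute vadd_vsub_cancel\<close>)

lemma card_plotkin_dual:
  assumes "A \<subseteq> vecs L" "B \<subseteq> vecs L"
  shows "card (plotkin_dual L A B) = card A * card B"
proof -
  have "inj_on (\<lambda>(a, b). cat L (vsub a b) b) (A \<times> B)"
  proof (rule inj_onI, clarify)
    fix a b a' b' assume ab: "a \<in> A" "b \<in> B" "a' \<in> A" "b' \<in> B"
      and eq: "cat L (vsub a b) b = cat L (vsub a' b') b'"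
    have bb: "b = b'" using arg_cong[OF eq, of "hi L"] by simp
    have "a = vadd b (vsub a b)" using ab assms by (auto simp: vadd_vsub_cancel)
    also have "\<dots> = vadd b' (vsub a' b')" using arg_cong[OF eq, of "lo L"] ab assms bb by (simp add: subset_iff)
    also have "\<dots> = a'" using ab assms by (auto simp: vadd_vsub_cancel)
    finally show "a = a' \<and> b = b'" using bb by simp
  qed
  then show ?thesis
    using assms by (simp add: plotkin_dual_eq_image card_image card_cartesian_product)
qed

lemma plotkin_mono: "A \<subseteq> A' \<Longrightarrow> B \<subseteq> B' \<Longrightarrow> plotkin L A B \<subseteq> plotkin L A' B'"
  unfolding plotkin_def by auto

lemma additive_code_plotkin:
  assumes A: "additive_code L A" and B: "additive_code L B"
  shows "additive_code (2 * L) (plotkin L A B)"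
  unfolding additive_code_def plotkin_def
  using additive_codeD[OF A] additive_codeD[OF B]
  by (auto simp: lo_vadd hi_vadd vsub_vadd_vadd lo_vneg hi_vneg vsub_vneg_vneg)

lemma dot_plotkin_word:
  assumes "u \<in> vecs L"
  shows "dot (2 * L) x (cat L u (vadd u v)) mod P
    = (dot L (vadd (lo L x) (hi L x)) u + dot L (hi L x) v) mod P"
proof -
  have "dot (2 * L) x (cat L u (vadd u v)) mod P = (dot L (lo L x) u + dot L (hi L x) (vadd u v)) mod P"
    using assms by (simp add: dot_double)
  also have "\<dots> = (dot L (lo L x) u + (dot L (hi L x) u + dot L (hi L x) v)) mod P"
    by (rule mod_add_cong[OF refl dot_vadd_right])
  also have "\<dots> = (dot L (vadd (lo L x) (hi L x)) u + dot L (hi L x) v) mod P"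
    unfolding add.assoc[symmetric] by (rule mod_add_cong[OF dot_vadd_left[symmetric] refl])
  finally show ?thesis .
qed

lemma dot_plotkin_dual_word:
  assumes "a \<in> vecs L" "b \<in> vecs L"
  shows "dot (2 * L) x (cat L (vsub a b) b) mod P
    = (dot L (lo L x) a + dot L (vsub (hi L x) (lo L x)) b) mod P"
proof -
  have "dot (2 * L) x (cat L (vsub a b) b) mod P = (dot L (lo L x) (vsub a b) + dot L (hi L x) b) mod P"
    using assms by (simp add: dot_double)
  also have "\<dots> = ((dot L (lo L x) a - dot L (lo L x) b) + dot L (hi L x) b) mod P"
    by (rule mod_add_cong[OF dot_vsub_right refl])
  also have "\<dots> = (dot L (lo L x) a + (dot L (hi L x) b - dot L (lo L x) b)) mod P"
    by (simp add: algebra_simps)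
  also have "\<dots> = (dot L (lo L x) a + dot L (vsub (hi L x) (lo L x)) b) mod P"
    by (rule mod_add_cong[OF refl dot_vsub_left[symmetric]])
  finally show ?thesis .
qed

lemma dual_plotkin:
  assumes A: "vzero \<in> A" "A \<subseteq> vecs L" and B: "vzero \<in> B" "B \<subseteq> vecs L"
  shows "dual (2 * L) (plotkin L A B) = plotkin_dual L (dual L A) (dual L B)"
proof -
  have "x \<in> dual (2 * L) (plotkin L A B) \<longleftrightarrow> x \<in> plotkin_dual L (dual L A) (dual L B)"
    if x: "x \<in> vecs (2 * L)" for x
  proof -
    have "x \<in> dual (2 * L) (plotkin L A B) \<longleftrightarrow>
        (\<forall>u\<in>A. \<forall>v\<in>B. dot (2 * L) x (cat L u (vadd u v)) mod P = 0)"
      using x A(2) B(2) by (simp add: dual_def plotkin_eq_image)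
    also have "\<dots> \<longleftrightarrow>
        (\<forall>u\<in>A. \<forall>v\<in>B. (dot L (vadd (lo L x) (hi L x)) u + dot L (hi L x) v) mod P = 0)"
      using A(2) dot_plotkin_word by (intro ball_cong refl) (simp add: subset_iff)
    also have "\<dots> \<longleftrightarrow> x \<in> plotkin_dual L (dual L A) (dual L B)"
      using x A(1) B(1) by (auto simp: dual_of_sums_iff plotkin_dual_def)
    finally show ?thesis .
  qed
  then show ?thesis using dual_subset_vecs unfolding plotkin_dual_def by blast
qed

lemma dual_plotkin_dual:
  assumes A: "vzero \<in> A" "A \<subseteq> vecs L" and B: "vzero \<in> B" "B \<subseteq> vecs L"
  shows "dual (2 * L) (plotkin_dual L A B) = plotkin L (dual L A) (dual L B)"
proof -
  have "x \<in> dual (2 * L) (plotkin_dual L A B) \<longleftrightarrow> x \<in> plotkin L (dual L A) (dual L B)"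
    if x: "x \<in> vecs (2 * L)" for x
  proof -
    have "x \<in> dual (2 * L) (plotkin_dual L A B) \<longleftrightarrow>
        (\<forall>a\<in>A. \<forall>b\<in>B. dot (2 * L) x (cat L (vsub a b) b) mod P = 0)"
      using x A(2) B(2) by (simp add: dual_def plotkin_dual_eq_image)
    also have "\<dots> \<longleftrightarrow>
        (\<forall>a\<in>A. \<forall>b\<in>B. (dot L (lo L x) a + dot L (vsub (hi L x) (lo L x)) b) mod P = 0)"
      using A(2) B(2) dot_plotkin_dual_word by (intro ball_cong refl) (simp add: subset_iff)
    also have "\<dots> \<longleftrightarrow> x \<in> plotkin L (dual L A) (dual L B)"
      using x A(1) B(1) by (simp add: dual_of_sums_iff plotkin_def)
    finally show ?thesis .
  qed
  then show ?thesis using dual_subset_vecs unfolding plotkin_def by blast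
qed

lemma weight_plotkin:
  assumes A: "additive_code L A" and B: "additive_code L B"
    and dA: "\<And>x. x \<in> A \<Longrightarrow> x \<noteq> vzero \<Longrightarrow> dA \<le> weight L x"
    and dB: "\<And>x. x \<in> B \<Longrightarrow> x \<noteq> vzero \<Longrightarrow> dB \<le> weight L x"
    and z: "z \<in> plotkin L A B" "z \<noteq> vzero"
  shows "min (2 * dA) dB \<le> weight (2 * L) z"
proof -
  have zv: "z \<in> vecs (2 * L)" and lo: "lo L z \<in> A" and d: "vsub (hi L z) (lo L z) \<in> B"
    using z unfolding plotkin_def by auto
  show ?thesis
  proof (cases "vsub (hi L z) (lo L z) = vzero")
    case True
    then have "hi L z = lo L z" using vsub_eq_vzero_iff[OF hi_vecs[OF zv] lo_vecs[OF zv]] by simp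
    moreover have "lo L z \<noteq> vzero" using calculation z(2) vzero_iff_lo_hi[OF zv] by auto
    ultimately show ?thesis using dA[OF lo] weight_double[of L z] by simp
  next
    case False
    then have "dB \<le> weight L (vsub (hi L z) (lo L z))" using dB[OF d] by simp
    also have "\<dots> \<le> weight L (hi L z) + weight L (lo L z)" using zv by (simp add: weight_vsub_le)
    finally show ?thesis using weight_double[of L z] by simp
  qed
qed

lemma weight_plotkin_dual:
  assumes dA: "\<And>x. x \<in> A \<Longrightarrow> x \<noteq> vzero \<Longrightarrow> dA \<le> weight L x"
    and dB: "\<And>x. x \<in> B \<Longrightarrow> x \<noteq> vzero \<Longrightarrow> dB \<le> weight L x"
    and z: "z \<in> plotkin_dual L A B" "z \<noteq> vzero"
  shows "min dA (2 * dB) \<le> weight (2 * L) z"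
proof -
  have zv: "z \<in> vecs (2 * L)" and hi: "hi L z \<in> B" and s: "vadd (lo L z) (hi L z) \<in> A"
    using z unfolding plotkin_dual_def by auto
  show ?thesis
  proof (cases "vadd (lo L z) (hi L z) = vzero")
    case True
    then have "lo L z = vneg (hi L z)" using vadd_eq_vzero_iff[OF lo_vecs[OF zv] hi_vecs[OF zv]] by simp
    moreover have "hi L z \<noteq> vzero" using calculation z(2) vzero_iff_lo_hi[OF zv] by auto
    ultimately show ?thesis using dB[OF hi] weight_double[of L z] weight_vneg zv by simp
  next
    case False
    then have "dA \<le> weight L (vadd (lo L z) (hi L z))" using dA[OF s] by simp
    also have "\<dots> \<le> weight L (lo L z) + weight L (hi L z)" by (rule weight_vadd_le)
    finally show ?thesis using weight_double[of L z] by simp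
  qed
qed

section \<open>Reed--Muller codes\<close>

text \<open>\<open>reed_muller t s m\<close> is the Reed--Muller code \<open>RM(s - 1, m)\<close> of length \<open>2^m\<close> over the
  alphabet \<open>(\<int>/p\<int>)^t\<close>, a symbol occupying \<open>t\<close> consecutive coordinates; it stands in for
  the \<open>\<bbbF>\<^sub>q\<close>-code of the paper, \<open>q = p^t\<close>, whose additive structure is the same.
  The shift in the order lets \<open>s = 0\<close> denote the zero code \<open>RM(-1, m)\<close>.\<close>

fun reed_muller :: "nat \<Rightarrow> nat \<Rightarrow> nat \<Rightarrow> (nat \<Rightarrow> int) set" where
  "reed_muller t s 0 = (if s = 0 then {vzero} else vecs t)"
| "reed_muller t s (Suc m) = plotkin (t * 2 ^ m) (reed_muller t s m) (reed_muller t (s - 1) m)"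

lemma mult_two_power_Suc: "t * 2 ^ Suc m = 2 * (t * 2 ^ m :: nat)"
  by simp

lemma additive_code_reed_muller: "additive_code (t * 2 ^ m) (reed_muller t s m)"
proof (induction m arbitrary: s)
  case (Suc m)
  show ?case unfolding reed_muller.simps(2) mult_two_power_Suc by (rule additive_code_plotkin[OF Suc Suc])
qed (simp add: additive_code_vecs additive_code_zero)

lemma reed_muller_zero: "reed_muller t 0 m = {vzero}"
proof (induction m)
  case (Suc m)
  let ?L = "t * 2 ^ m"
  have "z = vzero" if "z \<in> plotkin ?L {vzero} {vzero}" for z
  proof -
    from that have z: "z \<in> vecs (2 * ?L)" "lo ?L z = vzero" "vsub (hi ?L z) (lo ?L z) = vzero"
      unfolding plotkin_def by auto
    then have "hi ?L z = vzero" using vsub_eq_vzero_iff[OF hi_vecs[OF z(1)] lo_vecs[OF z(1)]] by simp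
    with z show ?thesis using vzero_iff_lo_hi by blast
  qed
  moreover have "vzero \<in> plotkin ?L {vzero} {vzero}" by (simp add: plotkin_def)
  ultimately show ?case using Suc by auto
qed simp

lemma reed_muller_mono: "s \<le> s' \<Longrightarrow> reed_muller t s m \<subseteq> reed_muller t s' m"
  by (induction m arbitrary: s s') (auto simp: plotkin_mono diff_le_mono)

lemma dual_reed_muller_Suc:
  "dual (t * 2 ^ Suc m) (reed_muller t s (Suc m))
    = plotkin_dual (t * 2 ^ m) (dual (t * 2 ^ m) (reed_muller t s m))
        (dual (t * 2 ^ m) (reed_muller t (s - 1) m))"
  unfolding mult_two_power_Suc
  by (simp add: dual_plotkin additive_codeD(1,2)[OF additive_code_reed_muller])

lemma weight_reed_muller:
  "1 \<le> s \<Longrightarrow> z \<in> reed_muller t s m \<Longrightarrow> z \<noteq> vzero \<Longrightarrow> 2 ^ (m + 1 - s) \<le> weight (t * 2 ^ m) z"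
proof (induction m arbitrary: s z)
  case 0
  then show ?case using weight_pos[of z t] by simp
next
  case (Suc m)
  have dB: "2 ^ (Suc m + 1 - s) \<le> weight (t * 2 ^ m) x"
    if "x \<in> reed_muller t (s - 1) m" "x \<noteq> vzero" for x
  proof (cases "s = 1")
    case True
    then show ?thesis using that reed_muller_zero by simp
  next
    case False
    then have "m + 1 - (s - 1) = Suc m + 1 - s" "1 \<le> s - 1" using Suc.prems(1) by auto
    then show ?thesis using Suc.IH[of "s - 1" x] that by simp
  qed
  have dA: "2 ^ (m + 1 - s) \<le> weight (t * 2 ^ m) x"
    if "x \<in> reed_muller t s m" "x \<noteq> vzero" for x
    using Suc.IH[OF Suc.prems(1) that] .
  have "min (2 * 2 ^ (m + 1 - s)) (2 ^ (Suc m + 1 - s)) \<le> weight (2 * (t * 2 ^ m)) z"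
    using weight_plotkin[OF additive_code_reed_muller additive_code_reed_muller dA dB] Suc.prems(2,3)
    by simp
  moreover have "(2::nat) ^ (Suc m + 1 - s) \<le> 2 * 2 ^ (m + 1 - s)"
    using power_increasing[of "Suc m + 1 - s" "Suc (m + 1 - s)" "2::nat"] by simp
  ultimately show ?case by (simp only: mult_two_power_Suc min_def split: if_splits)
qed

lemma weight_dual_reed_muller:
  "z \<in> dual (t * 2 ^ m) (reed_muller t s m) \<Longrightarrow> z \<noteq> vzero \<Longrightarrow> 2 ^ s \<le> weight (t * 2 ^ m) z"
proof (induction m arbitrary: s z)
  case 0
  then show ?case using weight_pos[of z t] dual_subset_vecs
    by (auto simp: dual_vecs dual_zero split: if_splits)
next
  case (Suc m)
  have "min (2 ^ s) (2 * 2 ^ (s - 1)) \<le> weight (2 * (t * 2 ^ m)) z"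
    using Suc.prems unfolding dual_reed_muller_Suc
    by (intro weight_plotkin_dual) (auto intro: Suc.IH simp: mult_two_power_Suc)
  moreover have "(2::nat) ^ s \<le> 2 * 2 ^ (s - 1)"
    by (cases s) auto
  ultimately show ?case unfolding mult_two_power_Suc by simp
qed

lemma dual_dual_reed_muller:
  "dual (t * 2 ^ m) (dual (t * 2 ^ m) (reed_muller t s m)) = reed_muller t s m"
proof (induction m arbitrary: s)
  case (Suc m)
  show ?case
    unfolding dual_reed_muller_Suc unfolding mult_two_power_Suc
    by (simp add: dual_plotkin_dual additive_codeD(2)[OF additive_code_dual] dual_subset_vecs Suc.IH)
qed (simp add: dual_vecs dual_zero)

lemma card_dual_reed_muller:
  "card (dual (t * 2 ^ m) (reed_muller t s m)) = p ^ (t * dual_rm_dim s m)"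
proof (induction m arbitrary: s)
  case 0
  then show ?case by (simp add: dual_vecs dual_zero card_vecs)
next
  case (Suc m)
  have "card (dual (t * 2 ^ Suc m) (reed_muller t s (Suc m)))
      = card (dual (t * 2 ^ m) (reed_muller t s m)) * card (dual (t * 2 ^ m) (reed_muller t (s - 1) m))"
    unfolding dual_reed_muller_Suc by (rule card_plotkin_dual) (use dual_subset_vecs in auto)
  then show ?case using Suc.IH by (simp add: power_add distrib_left)
qed

lemma card_dual_reed_muller_Suc:
  "card (dual (t * 2 ^ m) (reed_muller t (Suc r) m)) = p ^ (t * (2 ^ m - kRM m r))"
  using card_dual_reed_muller[of t m "Suc r"] dual_rm_dim_add_kRM[of r m]
  by (metis add_diff_cancel_right')

definition digits :: "nat \<Rightarrow> nat \<Rightarrow> nat \<Rightarrow> int" where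
  "digits N i = (\<lambda>l. if l < N then int (qdigit p i l) else 0)"

definition undigits :: "nat \<Rightarrow> (nat \<Rightarrow> int) \<Rightarrow> nat" where
  "undigits N x = inv_into {..<p ^ N} (digits N) x"

definition to_vec :: "nat \<Rightarrow> (nat \<Rightarrow> nat) \<Rightarrow> nat \<Rightarrow> int" where
  "to_vec N a = (\<lambda>l. if l < N then int (a l) else 0)"

definition omega :: "int \<Rightarrow> complex" where
  "omega k = cis (2 * pi * of_int k / real p)"

lemma qdigit_less: "qdigit p i l < p"
  unfolding qdigit_def by simp

lemma digits_vecs[simp]: "digits N i \<in> vecs N"
  unfolding digits_def by (rule vecsI) (auto simp: qdigit_less less_imp_of_nat_less)

lemma qdigit_Suc: "qdigit p i (Suc l) = qdigit p (i div p) l"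
  unfolding qdigit_def by (simp add: div_mult2_eq)

lemma qdigits_eq_imp_eq:
  "i < p ^ N \<Longrightarrow> j < p ^ N \<Longrightarrow> (\<forall>l<N. qdigit p i l = qdigit p j l) \<Longrightarrow> i = j"
proof (induction N arbitrary: i j)
  case (Suc N)
  have "i div p < p ^ N" "j div p < p ^ N"
    using Suc.prems(1,2) by (simp_all add: div_less_iff_less_mult mult.commute)
  moreover have "\<forall>l<N. qdigit p (i div p) l = qdigit p (j div p) l"
    using Suc.prems(3) qdigit_Suc by (metis Suc_mono)
  ultimately have "i div p = j div p" using Suc.IH by blast
  moreover have "i mod p = j mod p" using Suc.prems(3)[rule_format, of 0] by (simp add: qdigit_def)
  ultimately show ?case by (metis div_mult_mod_eq)
qed simp

lemma inj_on_digits: "inj_on (digits N) {..<p ^ N}"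
proof (rule inj_onI)
  fix i j assume "i \<in> {..<p ^ N}" "j \<in> {..<p ^ N}" and eq: "digits N i = digits N j"
  moreover have "\<forall>l<N. qdigit p i l = qdigit p j l"
    using eq unfolding digits_def by (metis of_nat_eq_iff)
  ultimately show "i = j" using qdigits_eq_imp_eq by auto
qed

lemma bij_betw_digits: "bij_betw (digits N) {..<p ^ N} (vecs N)"
proof -
  have "digits N ` {..<p ^ N} = vecs N"
    using card_image[OF inj_on_digits] card_vecs
    by (intro card_subset_eq) (auto simp: image_subset_iff)
  then show ?thesis using inj_on_digits by (simp add: bij_betw_def)
qed

lemma undigits_less: "x \<in> vecs N \<Longrightarrow> undigits N x < p ^ N"
  unfolding undigits_def using bij_betw_digits by (metis bij_betw_def inv_into_into lessThan_iff)

lemma digits_undigits[simp]: "x \<in> vecs N \<Longrightarrow> digits N (undigits N x) = x"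
  unfolding undigits_def using bij_betw_digits by (metis bij_betw_def f_inv_into_f)

lemma undigits_digits[simp]: "i < p ^ N \<Longrightarrow> undigits N (digits N i) = i"
  unfolding undigits_def using inj_on_digits by (simp add: inv_into_f_f)

lemma to_vec_vecs: "Fp_vec p N a \<Longrightarrow> to_vec N a \<in> vecs N"
  unfolding to_vec_def Fp_vec_def by (rule vecsI) (auto simp: less_imp_of_nat_less)

lemma hweight_eq_weight: "hweight N a = weight N (to_vec N a)"
  unfolding hweight_def weight_def to_vec_def by (rule arg_cong[where f = card]) auto

lemma omega_add: "omega (a + b) = omega a * omega b"
  unfolding omega_def cis_mult by (simp add: add_divide_distrib distrib_left)

lemma omega_mod: "omega (a mod P) = omega a"
proof -
  have "2 * pi * of_int (P * (a div P)) / real p = 2 * pi * of_int (a div P)"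
    using two_le_p by simp
  then have "omega (P * (a div P)) = 1"
    unfolding omega_def by simp
  then have "omega a = omega (a mod P)"
    using omega_add[of "a mod P" "P * (a div P)"] by simp
  then show ?thesis ..
qed

lemma omega_cong: "a mod P = b mod P \<Longrightarrow> omega a = omega b"
  by (metis omega_mod)

lemma cnj_omega: "cnj (omega a) = omega (- a)"
  unfolding omega_def cis_cnj by simp

lemma omega_eq_1_imp: "omega a = 1 \<Longrightarrow> a mod P = 0"
proof -
  assume "omega a = 1"
  then have "cos (2 * pi * of_int a / real p) = 1"
    unfolding omega_def by (metis Re_complex_of_real cis.sel(1) one_complex.sel(1))
  then obtain n :: int where "2 * pi * of_int a / real p = of_int n * 2 * pi"
    using cos_one_2pi_int by blast
  then have "real_of_int a = of_int n * real p" using two_le_p by (simp add: field_simps)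
  then have "a = n * P" by (metis of_int_eq_iff of_int_mult of_int_of_nat_eq)
  then show ?thesis by simp
qed

lemma cis_power_eq_omega: "cis (2 * pi / real p) ^ n = omega (int n)"
  unfolding omega_def DeMoivre by (simp add: field_simps)

lemma Xop_entry_iff:
  assumes a: "Fp_vec p N a"
  shows "(\<forall>l<N. qdigit p i l = (qdigit p j l + a l) mod p) \<longleftrightarrow>
    digits N j = vsub (digits N i) (to_vec N a)"
proof
  assume h: "\<forall>l<N. qdigit p i l = (qdigit p j l + a l) mod p"
  show "digits N j = vsub (digits N i) (to_vec N a)"
  proof
    fix l
    show "digits N j l = vsub (digits N i) (to_vec N a) l"
    proof (cases "l < N")
      case True
      have "int (qdigit p i l) = (int (qdigit p j l) + int (a l)) mod P"
        using h True by (metis of_nat_add of_nat_mod)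
      then have "(int (qdigit p i l) - int (a l)) mod P = int (qdigit p j l) mod P"
        by (metis add_diff_cancel_right' mod_diff_left_eq)
      also have "\<dots> = int (qdigit p j l)" using qdigit_less[of j l] by simp
      finally show ?thesis unfolding digits_def vsub_def to_vec_def using True by simp
    qed (simp add: digits_def vsub_def to_vec_def)
  qed
next
  assume h: "digits N j = vsub (digits N i) (to_vec N a)"
  show "\<forall>l<N. qdigit p i l = (qdigit p j l + a l) mod p"
  proof (intro allI impI)
    fix l assume l: "l < N"
    have "int (qdigit p j l) = (int (qdigit p i l) - int (a l)) mod P"
      using fun_cong[OF h, of l] l unfolding digits_def vsub_def to_vec_def by simp
    then have "int ((qdigit p j l + a l) mod p) = int (qdigit p i l) mod P"
      by (simp add: of_nat_mod mod_simps)
    then show "qdigit p i l = (qdigit p j l + a l) mod p"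
      using qdigit_less[of i l] by simp
  qed
qed

lemma Xop_mult_vec:
  assumes a: "Fp_vec p N a" and w: "w \<in> carrier_vec (p ^ N)" and i: "i < p ^ N"
  shows "(Xop p N a *\<^sub>v w) $ i = w $ undigits N (vsub (digits N i) (to_vec N a))"
proof -
  define j0 where "j0 = undigits N (vsub (digits N i) (to_vec N a))"
  have "vsub (digits N i) (to_vec N a) \<in> vecs N" using to_vec_vecs[OF a] by simp
  then have j0: "j0 < p ^ N" "digits N j0 = vsub (digits N i) (to_vec N a)"
    unfolding j0_def using undigits_less by auto
  have "(\<forall>l<N. qdigit p i l = (qdigit p j l + a l) mod p) \<longleftrightarrow> j = j0" if "j < p ^ N" for j
    using Xop_entry_iff[OF a] j0 inj_on_digits that by (auto simp: inj_on_def)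
  then have "(Xop p N a *\<^sub>v w) $ i = (\<Sum>j\<in>{0..<p ^ N}. (if j = j0 then 1 else 0) * w $ j)"
    unfolding Xop_def using i w by (auto simp: scalar_prod_def intro!: sum.cong)
  also have "\<dots> = (\<Sum>j\<in>{0..<p ^ N}. if j = j0 then w $ j else 0)"
    by (rule sum.cong) auto
  also have "\<dots> = w $ j0" using j0(1) by simp
  finally show ?thesis unfolding j0_def .
qed

lemma Zop_mult_vec:
  assumes w: "w \<in> carrier_vec (p ^ N)" and i: "i < p ^ N"
  shows "(Zop p N b *\<^sub>v w) $ i = omega (dot N (to_vec N b) (digits N i)) * w $ i"
proof -
  have dot_eq: "dot N (to_vec N b) (digits N i) = int (\<Sum>l<N. b l * qdigit p i l)"
    unfolding dot_def to_vec_def digits_def of_nat_sum by (rule sum.cong) auto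
  have "(Zop p N b *\<^sub>v w) $ i = (\<Sum>j\<in>{0..<p ^ N}.
      (if i = j then cis (2 * pi / real p) ^ (\<Sum>l<N. b l * qdigit p j l) else 0) * w $ j)"
    unfolding Zop_def using i w by (simp add: scalar_prod_def)
  also have "\<dots> = (\<Sum>j\<in>{0..<p ^ N}.
      if j = i then cis (2 * pi / real p) ^ (\<Sum>l<N. b l * qdigit p j l) * w $ j else 0)"
    by (rule sum.cong) auto
  also have "\<dots> = cis (2 * pi / real p) ^ (\<Sum>l<N. b l * qdigit p i l) * w $ i"
    using i by simp
  finally show ?thesis by (simp add: dot_eq cis_power_eq_omega)
qed

lemma error_mult_vec:
  assumes a: "Fp_vec p N a" and w: "w \<in> carrier_vec (p ^ N)" and i: "i < p ^ N"
  shows "((Xop p N a * Zop p N b) *\<^sub>v w) $ i =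
    omega (dot N (to_vec N b) (vsub (digits N i) (to_vec N a)))
      * w $ undigits N (vsub (digits N i) (to_vec N a))"
proof -
  have v: "vsub (digits N i) (to_vec N a) \<in> vecs N" using to_vec_vecs[OF a] by simp
  have X: "Xop p N a \<in> carrier_mat (p ^ N) (p ^ N)" and Z: "Zop p N b \<in> carrier_mat (p ^ N) (p ^ N)"
    unfolding Xop_def Zop_def by simp_all
  then have "((Xop p N a * Zop p N b) *\<^sub>v w) $ i = (Xop p N a *\<^sub>v (Zop p N b *\<^sub>v w)) $ i"
    using w by simp
  also have "\<dots> = (Zop p N b *\<^sub>v w) $ undigits N (vsub (digits N i) (to_vec N a))"
    using Z w by (intro Xop_mult_vec[OF a _ i]) auto
  also have "\<dots> = omega (dot N (to_vec N b) (vsub (digits N i) (to_vec N a)))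
      * w $ undigits N (vsub (digits N i) (to_vec N a))"
    using Zop_mult_vec[OF w undigits_less[OF v]] v by simp
  finally show ?thesis .
qed

lemma error_mult_vec_carrier: "(Xop p N a * Zop p N b) *\<^sub>v w \<in> carrier_vec (p ^ N)"
  by (rule carrier_vecI) (simp add: Xop_def)

end

section \<open>The CSS construction\<close>

abbreviation cspan :: "nat \<Rightarrow> complex vec set \<Rightarrow> complex vec set" where
  "cspan n \<equiv> LinearCombinations.module.span class_ring (module_vec TYPE(complex) n)"

abbreviation clin_dep :: "nat \<Rightarrow> complex vec set \<Rightarrow> bool" where
  "clin_dep n \<equiv> LinearCombinations.module.lin_dep class_ring (module_vec TYPE(complex) n)"

lemma span_lin_indpt:
  assumes "B \<subseteq> carrier_vec n" "finite B" "\<not> clin_dep n B"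
  shows "subspace class_ring (cspan n B) (module_vec TYPE(complex) n)"
    "vectorspace.dim class_ring ((module_vec TYPE(complex) n)\<lparr>carrier := cspan n B\<rparr>) = card B"
proof -
  interpret vec_space "TYPE(complex)" n .
  show "subspace class_ring (span B) V" using span_is_subspace assms by simp
  have "maximal B (\<lambda>T. T \<subseteq> B \<and> lin_indpt T)" unfolding maximal_def using assms by auto
  then show "vectorspace.dim class_ring (V\<lparr>carrier := span B\<rparr>) = card B"
    using assms by (intro dim_span) auto
qed

lemma span_carrier_vec: "B \<subseteq> carrier_vec n \<Longrightarrow> v \<in> cspan n B \<Longrightarrow> v \<in> carrier_vec n"
proof -
  interpret vec_space "TYPE(complex)" n .
  show "B \<subseteq> carrier_vec n \<Longrightarrow> v \<in> span B \<Longrightarrow> v \<in> carrier_vec n" using span_closed by simp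
qed

lemma span_entries_eq:
  assumes B: "B \<subseteq> carrier_vec n" and v: "v \<in> cspan n B" and i: "i < n" and j: "j < n"
    and eq: "\<And>b. b \<in> B \<Longrightarrow> b $ i = b $ j"
  shows "v $ i = v $ j"
proof -
  interpret vec_space "TYPE(complex)" n .
  obtain a A where A: "v = lincomb a A" "finite A" "A \<subseteq> B" using v unfolding span_def by auto
  have "v $ i = (\<Sum>x\<in>A. a x * x $ i)" using lincomb_index[OF i, of A a] A B by auto
  also have "\<dots> = (\<Sum>x\<in>A. a x * x $ j)" using A eq by (intro sum.cong) auto
  also have "\<dots> = v $ j" using lincomb_index[OF j, of A a] A B by auto
  finally show ?thesis .
qed

lemma span_entry_eq_0:
  assumes B: "B \<subseteq> carrier_vec n" and v: "v \<in> cspan n B" and i: "i < n"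
    and zero: "\<And>b. b \<in> B \<Longrightarrow> b $ i = 0"
  shows "v $ i = 0"
proof -
  interpret vec_space "TYPE(complex)" n .
  obtain a A where A: "v = lincomb a A" "finite A" "A \<subseteq> B" using v unfolding span_def by auto
  then show ?thesis using lincomb_index[OF i, of A a] B zero by (auto intro!: sum.neutral)
qed

lemma lin_indpt_if_separated:
  assumes B: "B \<subseteq> carrier_vec n"
    and sep: "\<And>b. b \<in> B \<Longrightarrow> \<exists>i<n. b $ i \<noteq> 0 \<and> (\<forall>b'\<in>B. b' \<noteq> b \<longrightarrow> b' $ i = 0)"
  shows "\<not> clin_dep n B"
proof
  interpret vec_space "TYPE(complex)" n .
  assume "lin_dep B"
  then obtain A a v where A: "finite A" "A \<subseteq> B" "lincomb a A = 0\<^sub>v n" "v \<in> A" "a v \<noteq> 0"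
    unfolding lin_dep_def by auto
  obtain i where i: "i < n" "v $ i \<noteq> 0" "\<forall>b'\<in>B. b' \<noteq> v \<longrightarrow> b' $ i = 0" using sep A by blast
  have "0 = lincomb a A $ i" using A i by simp
  also have "\<dots> = (\<Sum>x\<in>A. a x * x $ i)" using lincomb_index[OF i(1), of A a] A B by auto
  also have "\<dots> = a v * v $ i"
    using i A by (subst sum.remove[OF A(1) A(4)]) (auto intro!: sum.neutral)
  finally show False using A(5) i(2) by simp
qed

locale css_code = residue_vectors +
  fixes N :: nat and C1 C2 :: "(nat \<Rightarrow> int) set" and dx dz :: nat
  assumes additive_code_C1: "additive_code N C1"
    and additive_code_C2: "additive_code N C2"
    and C2_subset_C1: "C2 \<subseteq> C1"
    and weight_C1: "\<And>x. x \<in> C1 \<Longrightarrow> x \<notin> C2 \<Longrightarrow> dx \<le> weight N x"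
    and weight_dual_C2: "\<And>x. x \<in> dual N C2 \<Longrightarrow> x \<notin> dual N C1 \<Longrightarrow> dz \<le> weight N x"
begin

definition coset :: "(nat \<Rightarrow> int) \<Rightarrow> (nat \<Rightarrow> int) set" where
  "coset x = (\<lambda>c. vadd x c) ` C2"

definition cosets :: "(nat \<Rightarrow> int) set set" where
  "cosets = coset ` C1"

definition coset_state :: "(nat \<Rightarrow> int) set \<Rightarrow> complex vec" where
  "coset_state K = vec (p ^ N) (\<lambda>i. if digits N i \<in> K then 1 else 0)"

definition css_space :: "complex vec set" where
  "css_space = cspan (p ^ N) (coset_state ` cosets)"

definition amp :: "complex vec \<Rightarrow> (nat \<Rightarrow> int) \<Rightarrow> complex" where
  "amp w x = w $ undigits N x"

lemma C1_subset_vecs: "C1 \<subseteq> vecs N" and C2_subset_vecs: "C2 \<subseteq> vecs N"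
  using additive_codeD(1) additive_code_C1 additive_code_C2 by auto

lemma finite_C1: "finite C1" and finite_C2: "finite C2"
  using C1_subset_vecs C2_subset_vecs finite_subset finite_vecs by blast+

lemma coset_subset_C1: "x \<in> C1 \<Longrightarrow> coset x \<subseteq> C1"
  unfolding coset_def using C2_subset_C1 additive_codeD(3)[OF additive_code_C1] by auto

lemma mem_coset_self: "x \<in> vecs N \<Longrightarrow> x \<in> coset x"
  unfolding coset_def using additive_codeD(2)[OF additive_code_C2] by force

lemma vadd_mem_coset_iff:
  assumes x: "x \<in> vecs N" and y: "y \<in> vecs N" and c: "c \<in> C2"
  shows "vadd y c \<in> coset x \<longleftrightarrow> y \<in> coset x"
proof
  assume "vadd y c \<in> coset x"
  then obtain c1 where c1: "c1 \<in> C2" "vadd y c = vadd x c1" unfolding coset_def by auto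
  have "y = vsub (vadd y c) c" using vsub_vadd_cancel[OF y] by simp
  also have "\<dots> = vadd x (vsub c1 c)" using c1 vsub_vadd_left by simp
  finally show "y \<in> coset x"
    unfolding coset_def using additive_code_vsub[OF additive_code_C2 c1(1) c] by auto
next
  assume "y \<in> coset x"
  then obtain c1 where c1: "c1 \<in> C2" "y = vadd x c1" unfolding coset_def by auto
  then have "vadd y c = vadd x (vadd c1 c)" by (simp add: vadd_assoc)
  then show "vadd y c \<in> coset x"
    unfolding coset_def using additive_codeD(3)[OF additive_code_C2 c1(1) c] by auto
qed

lemma coset_eq:
  assumes x: "x \<in> vecs N" and y: "y \<in> coset x"
  shows "coset y = coset x"
proof
  obtain c where c: "c \<in> C2" "y = vadd x c" using y unfolding coset_def by auto
  have yv: "y \<in> vecs N" using c x C2_subset_vecs by auto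
  show "coset y \<subseteq> coset x"
  proof
    fix z assume "z \<in> coset y"
    then obtain c' where "c' \<in> C2" "z = vadd y c'" unfolding coset_def by auto
    then show "z \<in> coset x" using vadd_mem_coset_iff[OF x yv] y by simp
  qed
  show "coset x \<subseteq> coset y"
  proof
    fix z assume "z \<in> coset x"
    then obtain c' where c': "c' \<in> C2" "z = vadd x c'" unfolding coset_def by auto
    have "vadd y (vsub c' c) = z"
      unfolding c(2) c'(2) vadd_def vsub_def
      by (rule ext, simp only: mod_add_right_eq mod_add_left_eq, simp add: algebra_simps)
    then show "z \<in> coset y"
      unfolding coset_def using additive_code_vsub[OF additive_code_C2 c'(1) c(1)] by force
  qed
qed

lemma cosets_disjoint: "K1 \<in> cosets \<Longrightarrow> K2 \<in> cosets \<Longrightarrow> K1 \<noteq> K2 \<Longrightarrow> K1 \<inter> K2 = {}"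
  unfolding cosets_def using coset_eq C1_subset_vecs by blast

lemma card_coset: "x \<in> vecs N \<Longrightarrow> card (coset x) = card C2"
  unfolding coset_def
proof (rule card_image, rule inj_onI)
  fix c c' assume "x \<in> vecs N" "c \<in> C2" "c' \<in> C2" "vadd x c = vadd x c'"
  then show "c = c'" using vsub_vadd_cancel_left C2_subset_vecs by (metis subsetD)
qed

lemma Union_cosets: "\<Union> cosets = C1"
  unfolding cosets_def using coset_subset_C1 mem_coset_self C1_subset_vecs by blast

lemma card_cosets: "card cosets * card C2 = card C1"
proof -
  have "card C2 * card cosets = card (\<Union> cosets)"
    using finite_C1 card_coset C1_subset_vecs cosets_disjoint Union_cosets
    by (intro card_partition) (auto simp: cosets_def)
  then show ?thesis using Union_cosets by (simp add: mult.commute)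
qed

lemma coset_state_entry: "x \<in> vecs N \<Longrightarrow> coset_state K $ undigits N x = (if x \<in> K then 1 else 0)"
  unfolding coset_state_def using undigits_less by simp

lemma coset_states_carrier: "coset_state ` cosets \<subseteq> carrier_vec (p ^ N)"
  unfolding coset_state_def by auto

lemma coset_state_separates:
  assumes "K \<in> cosets"
  obtains x where "x \<in> vecs N" "coset_state K $ undigits N x = 1"
    "\<And>K'. K' \<in> cosets \<Longrightarrow> K' \<noteq> K \<Longrightarrow> coset_state K' $ undigits N x = 0"
proof -
  obtain x where x: "x \<in> C1" "K = coset x" using assms unfolding cosets_def by auto
  then have "x \<in> vecs N" "x \<in> K" using mem_coset_self C1_subset_vecs by auto
  then show ?thesis
    using that cosets_disjoint[OF _ assms] coset_state_entry by (metis disjoint_iff)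
qed

lemma inj_on_coset_state: "inj_on coset_state cosets"
proof (rule inj_onI, rule ccontr)
  fix K1 K2 assume "K1 \<in> cosets" "K2 \<in> cosets" "coset_state K1 = coset_state K2" "K1 \<noteq> K2"
  then show False using coset_state_separates[of K1] by (metis zero_neq_one)
qed

lemma coset_states_lin_indpt: "\<not> clin_dep (p ^ N) (coset_state ` cosets)"
proof (rule lin_indpt_if_separated[OF coset_states_carrier])
  fix b assume "b \<in> coset_state ` cosets"
  then obtain K where K: "K \<in> cosets" "b = coset_state K" by auto
  obtain x where "x \<in> vecs N" "coset_state K $ undigits N x = 1"
    "\<And>K'. K' \<in> cosets \<Longrightarrow> K' \<noteq> K \<Longrightarrow> coset_state K' $ undigits N x = 0"
    using coset_state_separates[OF K(1)] by blast
  then show "\<exists>i<p ^ N. b $ i \<noteq> 0 \<and> (\<forall>b'\<in>coset_state ` cosets. b' \<noteq> b \<longrightarrow> b' $ i = 0)"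
    using K undigits_less by (intro exI[of _ "undigits N x"]) auto
qed

lemma subspace_css_space: "subspace class_ring css_space (module_vec TYPE(complex) (p ^ N))"
  and dim_css_space:
    "vectorspace.dim class_ring ((module_vec TYPE(complex) (p ^ N))\<lparr>carrier := css_space\<rparr>) = card cosets"
  using span_lin_indpt[OF coset_states_carrier _ coset_states_lin_indpt] finite_C1
    card_image[OF inj_on_coset_state]
  unfolding css_space_def cosets_def by auto

lemma css_space_carrier: "u \<in> css_space \<Longrightarrow> u \<in> carrier_vec (p ^ N)"
  unfolding css_space_def using span_carrier_vec[OF coset_states_carrier] by blast

lemma amp_eq_0_outside_C1:
  assumes u: "u \<in> css_space" and z: "z \<in> vecs N" "z \<notin> C1"
  shows "amp u z = 0"
  unfolding amp_def
proof (rule span_entry_eq_0[OF coset_states_carrier u[unfolded css_space_def] undigits_less[OF z(1)]])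
  fix b assume "b \<in> coset_state ` cosets"
  then obtain x where "x \<in> C1" "b = coset_state (coset x)" unfolding cosets_def by auto
  then show "b $ undigits N z = 0" using coset_subset_C1 coset_state_entry z by auto
qed

lemma amp_vadd_C2:
  assumes u: "u \<in> css_space" and z: "z \<in> vecs N" and c: "c \<in> C2"
  shows "amp u (vadd z c) = amp u z"
  unfolding amp_def
proof (rule span_entries_eq[OF coset_states_carrier u[unfolded css_space_def]])
  have zc: "vadd z c \<in> vecs N" using z c C2_subset_vecs by auto
  then show "undigits N (vadd z c) < p ^ N" "undigits N z < p ^ N"
    using undigits_less z by auto
  fix b assume "b \<in> coset_state ` cosets"
  then obtain x where "x \<in> C1" "b = coset_state (coset x)" unfolding cosets_def by auto
  then show "b $ undigits N (vadd z c) = b $ undigits N z"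
    using coset_state_entry[OF z] coset_state_entry[OF zc] vadd_mem_coset_iff[OF _ z c] C1_subset_vecs
    by auto
qed

section \<open>The Knill--Laflamme condition\<close>

definition twisted_inner :: "(nat \<Rightarrow> int) \<Rightarrow> complex vec \<Rightarrow> complex vec \<Rightarrow> complex" where
  "twisted_inner b u v = (\<Sum>z\<in>vecs N. omega (dot N b z) * (cnj (amp u z) * amp v z))"

definition error_inner ::
    "(nat \<Rightarrow> int) \<Rightarrow> (nat \<Rightarrow> int) \<Rightarrow> (nat \<Rightarrow> int) \<Rightarrow> complex vec \<Rightarrow> complex vec \<Rightarrow> complex" where
  "error_inner b1 b2 a u v = (\<Sum>z\<in>vecs N.
     cnj (omega (dot N b1 z) * amp u z) * (omega (dot N b2 (vsub z a)) * amp v (vsub z a)))"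

lemma cinner_eq_sum_amp:
  assumes "u \<in> carrier_vec (p ^ N)" "v \<in> carrier_vec (p ^ N)"
  shows "cinner u v = (\<Sum>x\<in>vecs N. cnj (amp u x) * amp v x)"
proof -
  have "cinner u v = (\<Sum>i<p ^ N. cnj (amp u (digits N i)) * amp v (digits N i))"
    unfolding cinner_def amp_def using assms by (intro sum.cong) auto
  also have "\<dots> = (\<Sum>x\<in>vecs N. cnj (amp u x) * amp v x)"
    by (rule sum.reindex_bij_betw[OF bij_betw_digits])
  finally show ?thesis .
qed

lemma cinner_error_ops:
  assumes a1: "Fp_vec p N a1" and a2: "Fp_vec p N a2"
    and u: "u \<in> carrier_vec (p ^ N)" and v: "v \<in> carrier_vec (p ^ N)"
  shows "cinner ((Xop p N a1 * Zop p N b1) *\<^sub>v u) ((Xop p N a2 * Zop p N b2) *\<^sub>v v)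
    = error_inner (to_vec N b1) (to_vec N b2) (vsub (to_vec N a2) (to_vec N a1)) u v"
proof -
  define A1 A2 where "A1 = to_vec N a1" and "A2 = to_vec N a2"
  have A1: "A1 \<in> vecs N" unfolding A1_def using to_vec_vecs a1 by auto
  define H where "H x = cnj (omega (dot N (to_vec N b1) (vsub x A1)) * amp u (vsub x A1)) *
      (omega (dot N (to_vec N b2) (vsub x A2)) * amp v (vsub x A2))" for x
  have "cinner ((Xop p N a1 * Zop p N b1) *\<^sub>v u) ((Xop p N a2 * Zop p N b2) *\<^sub>v v)
      = (\<Sum>i<p ^ N. H (digits N i))"
    unfolding cinner_def
  proof (rule sum.cong)
    show "{..<dim_vec ((Xop p N a1 * Zop p N b1) *\<^sub>v u)} = {..<p ^ N}"
      using error_mult_vec_carrier by (metis carrier_vecD)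
  qed (simp add: H_def amp_def A1_def A2_def error_mult_vec[OF a1 u] error_mult_vec[OF a2 v])
  also have "\<dots> = (\<Sum>x\<in>vecs N. H x)"
    by (rule sum.reindex_bij_betw[OF bij_betw_digits])
  also have "\<dots> = (\<Sum>z\<in>vecs N. H (vadd z A1))"
    by (rule sum_vecs_shift[OF A1, symmetric])
  also have "\<dots> = error_inner (to_vec N b1) (to_vec N b2) (vsub A2 A1) u v"
    unfolding error_inner_def H_def by (intro sum.cong refl) (simp add: vsub_vadd_cancel vsub_vadd_right)
  finally show ?thesis unfolding A1_def A2_def .
qed

lemma twisted_inner_dual_C1:
  assumes "b \<in> dual N C1" "u \<in> css_space" "v \<in> css_space"
  shows "twisted_inner b u v = cinner u v"
proof -
  have eq: "omega (dot N b z) * (cnj (amp u z) * amp v z) = cnj (amp u z) * amp v z"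
    if "z \<in> vecs N" for z
  proof (cases "z \<in> C1")
    case True
    then have "omega (dot N b z) = omega 0" using assms(1) by (intro omega_cong) (simp add: dual_def)
    then show ?thesis by (simp add: omega_def)
  qed (use amp_eq_0_outside_C1 assms that in auto)
  have "twisted_inner b u v = (\<Sum>z\<in>vecs N. cnj (amp u z) * amp v z)"
    unfolding twisted_inner_def using eq by (rule sum.cong[OF refl])
  then show ?thesis using assms css_space_carrier by (simp add: cinner_eq_sum_amp)
qed

text \<open>Translating by \<open>c \<in> C2\<close> leaves the amplitudes of code vectors unchanged but multiplies
  the character \<open>\<omega>^(b\<cdot>z)\<close> by \<open>\<omega>^(b\<cdot>c) \<noteq> 1\<close>.\<close>

lemma twisted_inner_eq_0:
  assumes c: "c \<in> C2" "dot N b c mod P \<noteq> 0" and u: "u \<in> css_space" and v: "v \<in> css_space"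
  shows "twisted_inner b u v = 0"
proof -
  define f where "f z = omega (dot N b z) * (cnj (amp u z) * amp v z)" for z
  have cv: "c \<in> vecs N" using c C2_subset_vecs by auto
  have "twisted_inner b u v = (\<Sum>z\<in>vecs N. f (vadd z c))"
    unfolding twisted_inner_def f_def by (rule sum_vecs_shift[OF cv, symmetric])
  also have "\<dots> = (\<Sum>z\<in>vecs N. omega (dot N b c) * f z)"
  proof (rule sum.cong[OF refl])
    fix z assume z: "z \<in> vecs N"
    have "omega (dot N b (vadd z c)) = omega (dot N b z) * omega (dot N b c)"
      unfolding omega_add[symmetric] by (rule omega_cong) (simp add: dot_vadd_right)
    then show "f (vadd z c) = omega (dot N b c) * f z"
      unfolding f_def using amp_vadd_C2[OF u z c(1)] amp_vadd_C2[OF v z c(1)] by simp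
  qed
  also have "\<dots> = omega (dot N b c) * twisted_inner b u v"
    unfolding twisted_inner_def f_def by (simp add: sum_distrib_left)
  finally have "(1 - omega (dot N b c)) * twisted_inner b u v = 0"
    by (simp add: algebra_simps)
  moreover have "omega (dot N b c) \<noteq> 1" using omega_eq_1_imp c(2) by blast
  ultimately show ?thesis by simp
qed

lemma error_inner_C2:
  assumes a: "a \<in> C2" and u: "u \<in> css_space" and v: "v \<in> css_space"
  shows "error_inner b1 b2 a u v = omega (- dot N b2 a) * twisted_inner (vsub b2 b1) u v"
proof -
  have "vneg a \<in> C2" using additive_codeD(4)[OF additive_code_C2 a] .
  then have amp_v: "amp v (vsub z a) = amp v z" if "z \<in> vecs N" for z
    using amp_vadd_C2[OF v that] by (simp add: vsub_eq_vadd_vneg)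
  have "omega (dot N b2 (vsub z a)) = omega (dot N b2 z) * omega (- dot N b2 a)" for z
    unfolding omega_add[symmetric] by (rule omega_cong) (simp add: dot_vsub_right)
  moreover have "omega (dot N (vsub b2 b1) z) = omega (dot N b2 z) * omega (- dot N b1 z)" for z
    unfolding omega_add[symmetric] by (rule omega_cong) (simp add: dot_vsub_left)
  ultimately show ?thesis
    unfolding error_inner_def twisted_inner_def sum_distrib_left
    by (intro sum.cong refl) (simp add: amp_v cnj_omega)
qed

lemma error_inner_outside_C2:
  assumes a: "a \<in> vecs N" "a \<notin> C2" "weight N a < dx" and u: "u \<in> css_space" and v: "v \<in> css_space"
  shows "error_inner b1 b2 a u v = 0"
proof -
  have "amp u z = 0 \<or> amp v (vsub z a) = 0" if z: "z \<in> vecs N" for z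
  proof (rule ccontr)
    assume "\<not> (amp u z = 0 \<or> amp v (vsub z a) = 0)"
    then have "z \<in> C1" "vsub z a \<in> C1"
      using amp_eq_0_outside_C1[OF u z] amp_eq_0_outside_C1[OF v vsub_vecs[OF z a(1)]] by auto
    then have "a \<in> C1" using additive_code_vsub[OF additive_code_C1] vsub_vsub_cancel[OF a(1)] by metis
    then show False using weight_C1 a(2,3) by fastforce
  qed
  then show ?thesis unfolding error_inner_def by (intro sum.neutral) auto
qed

lemma error_inner_proportional:
  assumes a: "a \<in> vecs N" "weight N a < dx"
    and b: "b1 \<in> vecs N" "b2 \<in> vecs N" "weight N (vsub b2 b1) < dz"
  shows "\<exists>c. \<forall>u\<in>css_space. \<forall>v\<in>css_space. error_inner b1 b2 a u v = c * cinner u v"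
proof (cases "a \<in> C2")
  case False
  then show ?thesis using a error_inner_outside_C2 by (intro exI[of _ 0]) simp
next
  case True
  have "vsub b2 b1 \<notin> dual N C2 \<or> vsub b2 b1 \<in> dual N C1" using weight_dual_C2 b(3) by fastforce
  then consider "vsub b2 b1 \<in> dual N C1" | c where "c \<in> C2" "dot N (vsub b2 b1) c mod P \<noteq> 0"
    using b unfolding dual_def by auto
  then show ?thesis
  proof cases
    case 1
    then show ?thesis
      using True by (intro exI[of _ "omega (- dot N b2 a)"]) (simp add: error_inner_C2 twisted_inner_dual_C1)
  next
    case 2
    then show ?thesis
      using True by (intro exI[of _ 0]) (simp add: error_inner_C2 twisted_inner_eq_0)
  qed
qed

lemma corrects_css_space:
  assumes "2 * ex < dx" "2 * ez < dz"
  shows "corrects css_space (error_set p N ex ez)"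
  unfolding corrects_def
proof (intro ballI)
  fix E1 E2 assume "E1 \<in> error_set p N ex ez" "E2 \<in> error_set p N ex ez"
  then obtain a1 b1 a2 b2 where E: "E1 = Xop p N a1 * Zop p N b1" "E2 = Xop p N a2 * Zop p N b2"
    and vec: "Fp_vec p N a1" "Fp_vec p N b1" "Fp_vec p N a2" "Fp_vec p N b2"
    and wt: "hweight N a1 \<le> ex" "hweight N b1 \<le> ez" "hweight N a2 \<le> ex" "hweight N b2 \<le> ez"
    unfolding error_set_def by blast
  note vecs = to_vec_vecs[OF vec(1)] to_vec_vecs[OF vec(2)] to_vec_vecs[OF vec(3)] to_vec_vecs[OF vec(4)]
  have "weight N (vsub (to_vec N a2) (to_vec N a1)) < dx"
    using weight_vsub_le[OF vecs(1), of "to_vec N a2"] wt assms(1) unfolding hweight_eq_weight by linarith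
  moreover have "weight N (vsub (to_vec N b2) (to_vec N b1)) < dz"
    using weight_vsub_le[OF vecs(2), of "to_vec N b2"] wt assms(2) unfolding hweight_eq_weight by linarith
  ultimately obtain c where "\<forall>u\<in>css_space. \<forall>v\<in>css_space.
      error_inner (to_vec N b1) (to_vec N b2) (vsub (to_vec N a2) (to_vec N a1)) u v = c * cinner u v"
    using error_inner_proportional[OF vsub_vecs[OF vecs(3,1)] _ vecs(2,4)] by blast
  then show "\<exists>c. \<forall>u\<in>css_space. \<forall>v\<in>css_space. cinner (E1 *\<^sub>v u) (E2 *\<^sub>v v) = c * cinner u v"
    using cinner_error_ops[OF vec(1,3)] css_space_carrier unfolding E by auto
qed

lemma is_AQECC_css_space:
  assumes "0 < dx" "0 < dz" "card C1 = p ^ k * card C2"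
  shows "is_AQECC p N k dz dx css_space"
proof -
  have "card C2 > 0" using finite_C2 additive_codeD(2)[OF additive_code_C2] by (auto simp: card_gt_0_iff)
  then have "card cosets = p ^ k" using card_cosets assms(3) by simp
  moreover have "corrects css_space (error_set p N ((dx - 1) div 2) ((dz - 1) div 2))"
    using assms(1,2) by (intro corrects_css_space) auto
  ultimately show ?thesis
    unfolding is_AQECC_def using subspace_css_space dim_css_space by simp
qed

end

context residue_vectors
begin

lemma css_code_reed_muller:
  assumes "r1 < r2" "r2 \<le> m"
  shows "css_code p (t * 2 ^ m) (dual (t * 2 ^ m) (reed_muller t (Suc r1) m))
    (dual (t * 2 ^ m) (reed_muller t (Suc r2) m)) (2 ^ (r1 + 1)) (2 ^ (m - r2))"
proof
  let ?L = "t * 2 ^ m"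
  show "additive_code ?L (dual ?L (reed_muller t (Suc r1) m))"
    "additive_code ?L (dual ?L (reed_muller t (Suc r2) m))"
    by (rule additive_code_dual)+
  show "dual ?L (reed_muller t (Suc r2) m) \<subseteq> dual ?L (reed_muller t (Suc r1) m)"
    using assms(1) by (intro dual_antimono reed_muller_mono) simp
  show "2 ^ (r1 + 1) \<le> weight ?L x"
    if x: "x \<in> dual ?L (reed_muller t (Suc r1) m)" "x \<notin> dual ?L (reed_muller t (Suc r2) m)" for x
  proof -
    have "x \<noteq> vzero" using x(2) additive_codeD(2)[OF additive_code_dual] by auto
    then show ?thesis using weight_dual_reed_muller[OF x(1)] by simp
  qed
  show "2 ^ (m - r2) \<le> weight ?L x"
    if x: "x \<in> dual ?L (dual ?L (reed_muller t (Suc r2) m))"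
      "x \<notin> dual ?L (dual ?L (reed_muller t (Suc r1) m))" for x
  proof -
    have "x \<noteq> vzero" using x(2) additive_codeD(2)[OF additive_code_dual] by auto
    then show ?thesis
      using weight_reed_muller[of "Suc r2" x t m] x(1) assms(2) by (simp add: dual_dual_reed_muller)
  qed
qed

end

theorem theorem11:
  fixes m r1 r2 p t :: nat
  assumes "m \<ge> 1" and "r1 < r2" and "r2 \<le> m"
    and "prime p" and "odd p" and "t \<ge> 1"
  shows "\<exists>dz dx Q. dz \<ge> 2 ^ (m - r2) \<and> dx \<ge> 2 ^ (r1 + 1) \<and>
           is_AQECC p (t * 2 ^ m) (t * (kRM m r2 - kRM m r1)) dz dx Q"
proof -
  interpret residue_vectors p using prime_ge_2_nat[OF assms(4)] by unfold_locales
  let ?L = "t * 2 ^ m" and ?C = "\<lambda>r. dual (t * 2 ^ m) (reed_muller t (Suc r) m)"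
  interpret css_code p ?L "?C r1" "?C r2" "2 ^ (r1 + 1)" "2 ^ (m - r2)"
    using assms(2,3) by (rule css_code_reed_muller)
  have "kRM m r1 \<le> kRM m r2" "kRM m r2 \<le> 2 ^ m"
    using kRM_mono[of r1 r2 m] assms(2) dual_rm_dim_add_kRM[of r2 m] by auto
  then have "t * (2 ^ m - kRM m r1) = t * (kRM m r2 - kRM m r1) + t * (2 ^ m - kRM m r2)"
    by (simp add: diff_mult_distrib2)
  then have "card (?C r1) = p ^ (t * (kRM m r2 - kRM m r1)) * card (?C r2)"
    by (simp add: card_dual_reed_muller_Suc power_add)
  then have "is_AQECC p ?L (t * (kRM m r2 - kRM m r1)) (2 ^ (m - r2)) (2 ^ (r1 + 1)) css_space"
    by (intro is_AQECC_css_space) simp_all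
  then show ?thesis by blast
qed

end
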